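(* On the event described in Lemma 2.4 (namely: (a) whenever $p_j$ and $a_i$ interview each other, $i\le j+8\log n$; and (b) whenever the algorithm considers a proposal to $p_j$, all $p_{j'}$ with $j'<\min(j,n-8\log n)$ are matched), suppose the Adaptive Algorithm is considering the proposal between applicant $a_{i^*}$ and position $p_{j^*}$. Then for every $k\le j^*$, the current matching $\mu$ satisfies $$\big|\{(a_i,p_j)\in\mu : i<k,\ j\ge k\}\big|\le 8\log n.$$
   Context: Logarithms are base 2. Model. Let $A=\{a_1,\dots,a_n\}$ be a set of applicants and $P=\{p_1,\dots,p_n\}$ a set of positions. Each applicant $a_i$ has a publicly known value $u_i\in\mathbb R$ and each position $p_j$ a publicly known value $v_j\in\mathbb R$, indexed so that $u_1\ge u_2\ge\dots\ge u_n$ and $v_1\ge v_2\ge\dots\ge v_n$. The random variables $\epsilon^A_{ij}$, $\epsilon^P_{ji}$ ($i,j\in[n]$) are mutually independent and identically distributed according to a known distribution symmetric about $0$ (mean zero). The utility of $a_i$ for $p_j$ is $v_j+\epsilon^A_{ij}$ and the utility of $p_j$ for $a_i$ is $u_i+\epsilon^P_{ji}$; the values $\epsilon^A_{ij},\epsilon^P_{ji}$ become known only when $a_i$ and $p_j$ interview each other. The observed utility $v^o_{ij}$ of $a_i$ for $p_j$ equals $v_j+\epsilon^A_{ij}$ if $a_i,p_j$ have interviewed and $v_j$ otherwise; $u^o_{ji}$ is defined symmetrically ($u_i+\epsilon^P_{ji}$ or $u_i$). Write $p_j\succ_{a_i}p_{j'}$ iff $v^o_{ij}>v^o_{ij'}$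 and $a_i\succ_{p_j}a_{i'}$ iff $u^o_{ji}>u^o_{ji'}$ (ties broken in favor of the smaller index); every agent prefers any partner to being unmatched. For a matching $\mu$, $\mu(x)$ denotes the partner of $x$ ($\emptyset$ if unmatched). Adaptive Algorithm. Initially all agents are unmatched and $v^o_{ij}=v_j$, $u^o_{ji}=u_i$ for all $i,j$. For an unmatched applicant $a$, let $\beta(a)$ be $a$'s most preferred position (w.r.t. current observed utilities) that has not yet rejected $a$. While some applicant is unmatched: let $j^*$ be the smallest index such that $\beta(a_i)=p_{j^*}$ for some unmatched $a_i$; let $a_{i^*}$ be $p_{j^*}$'s favorite applicant among $\{a_i:\beta(a_i)=p_{j^*},\mu(a_i)=\emptyset\}$. If $a_{i^*},p_{j^*}$ have not interviewed and ($i^*\le j^*$ or $a_{i^*}\succ_{p_{j^*}}\mu(p_{j^*})$), then they interview and $v^o_{i^*j^*},u^o_{j^*i^*}$ are updated. Otherwise: if $\mu(p_{j^*})\succ_{p_{j^*}}a_{i^*}$, then $p_{j^*}$ rejects $a_{i^*}$; else $p_{j^*}$ rejects $\mu(p_{j^*})$ (if nonempty) and $a_{i^*},p_{j^*}$ become matched. When all applicants are matched, output $\mu$. *)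

theory Defs
  imports Complex_Main
begin

text \<open>Agents are indexed 1..n: applicant a_i is i, position p_j is j.
  A state of the Adaptive Algorithm records the matching (applicant to position),
  the set of interviewed pairs (i,j), and the set of rejections (i,j) meaning
  "p_j has rejected a_i".\<close>

record st =
  mu   :: "nat \<Rightarrow> nat option"
  intv :: "(nat \<times> nat) set"
  rej  :: "(nat \<times> nat) set"

definition init_st :: st where
  "init_st = \<lparr>mu = (\<lambda>_. None), intv = {}, rej = {}\<rparr>"

definition vo :: "(nat \<Rightarrow> real) \<Rightarrow> (nat \<Rightarrow> nat \<Rightarrow> real) \<Rightarrow> (nat \<times> nat) set \<Rightarrow> nat \<Rightarrow> nat \<Rightarrow> real" where
  "vo v eA I i j = v j + (if (i, j) \<in> I then eA i j else 0)"

definition uo :: "(nat \<Rightarrow> real) \<Rightarrow> (nat \<Rightarrow> nat \<Rightarrow> real) \<Rightarrow> (nat \<times> nat) set \<Rightarrow> nat \<Rightarrow> nat \<Rightarrow> real" where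
  "uo u eP I j i = u i + (if (i, j) \<in> I then eP j i else 0)"

definition prefA :: "(nat \<Rightarrow> real) \<Rightarrow> (nat \<Rightarrow> nat \<Rightarrow> real) \<Rightarrow> (nat \<times> nat) set \<Rightarrow> nat \<Rightarrow> nat \<Rightarrow> nat \<Rightarrow> bool" where
  "prefA v eA I i j j' \<longleftrightarrow> vo v eA I i j > vo v eA I i j' \<or> (vo v eA I i j = vo v eA I i j' \<and> j < j')"

definition prefP :: "(nat \<Rightarrow> real) \<Rightarrow> (nat \<Rightarrow> nat \<Rightarrow> real) \<Rightarrow> (nat \<times> nat) set \<Rightarrow> nat \<Rightarrow> nat \<Rightarrow> nat \<Rightarrow> bool" where
  "prefP u eP I j i i' \<longleftrightarrow> uo u eP I j i > uo u eP I j i' \<or> (uo u eP I j i = uo u eP I j i' \<and> i < i')"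

definition avail :: "nat \<Rightarrow> st \<Rightarrow> nat \<Rightarrow> nat set" where
  "avail n s i = {j \<in> {1..n}. (i, j) \<notin> rej s}"

definition beta :: "nat \<Rightarrow> (nat \<Rightarrow> real) \<Rightarrow> (nat \<Rightarrow> nat \<Rightarrow> real) \<Rightarrow> st \<Rightarrow> nat \<Rightarrow> nat" where
  "beta n v eA s i = (THE j. j \<in> avail n s i \<and> (\<forall>j' \<in> avail n s i. j' \<noteq> j \<longrightarrow> prefA v eA (intv s) i j j'))"

definition unmatched :: "nat \<Rightarrow> st \<Rightarrow> nat set" where
  "unmatched n s = {i \<in> {1..n}. mu s i = None}"

definition proposers :: "nat \<Rightarrow> st \<Rightarrow> nat set" where
  "proposers n s = {i \<in> unmatched n s. avail n s i \<noteq> {}}"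

definition jstar :: "nat \<Rightarrow> (nat \<Rightarrow> real) \<Rightarrow> (nat \<Rightarrow> nat \<Rightarrow> real) \<Rightarrow> st \<Rightarrow> nat" where
  "jstar n v eA s = Min (beta n v eA s ` proposers n s)"

definition istar :: "nat \<Rightarrow> (nat \<Rightarrow> real) \<Rightarrow> (nat \<Rightarrow> real) \<Rightarrow> (nat \<Rightarrow> nat \<Rightarrow> real) \<Rightarrow> (nat \<Rightarrow> nat \<Rightarrow> real) \<Rightarrow> st \<Rightarrow> nat" where
  "istar n u v eA eP s =
     (let j = jstar n v eA s; S = {i \<in> proposers n s. beta n v eA s i = j}
      in THE i. i \<in> S \<and> (\<forall>i' \<in> S. i' \<noteq> i \<longrightarrow> prefP u eP (intv s) j i i'))"

definition partner :: "st \<Rightarrow> nat \<Rightarrow> nat option" where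
  "partner s j = (if \<exists>i. mu s i = Some j then Some (THE i. mu s i = Some j) else None)"

definition better_than_cur :: "(nat \<Rightarrow> real) \<Rightarrow> (nat \<Rightarrow> nat \<Rightarrow> real) \<Rightarrow> st \<Rightarrow> nat \<Rightarrow> nat \<Rightarrow> bool" where
  "better_than_cur u eP s j i =
     (case partner s j of None \<Rightarrow> True | Some i' \<Rightarrow> prefP u eP (intv s) j i i')"

definition alg_step :: "nat \<Rightarrow> (nat \<Rightarrow> real) \<Rightarrow> (nat \<Rightarrow> real) \<Rightarrow> (nat \<Rightarrow> nat \<Rightarrow> real) \<Rightarrow> (nat \<Rightarrow> nat \<Rightarrow> real) \<Rightarrow> st \<Rightarrow> st" where
  "alg_step n u v eA eP s =
     (let j = jstar n v eA s; i = istar n u v eA eP s in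
      if (i, j) \<notin> intv s \<and> (i \<le> j \<or> better_than_cur u eP s j i)
      then s\<lparr>intv := insert (i, j) (intv s)\<rparr>
      else (case partner s j of
              Some i' \<Rightarrow>
                if prefP u eP (intv s) j i' i
                then s\<lparr>rej := insert (i, j) (rej s)\<rparr>
                else s\<lparr>mu := (mu s)(i' := None, i := Some j), rej := insert (i', j) (rej s)\<rparr>
            | None \<Rightarrow> s\<lparr>mu := (mu s)(i := Some j)\<rparr>))"

definition loop_step :: "nat \<Rightarrow> (nat \<Rightarrow> real) \<Rightarrow> (nat \<Rightarrow> real) \<Rightarrow> (nat \<Rightarrow> nat \<Rightarrow> real) \<Rightarrow> (nat \<Rightarrow> nat \<Rightarrow> real) \<Rightarrow> st \<Rightarrow> st \<Rightarrow> bool" where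
  "loop_step n u v eA eP s s' \<longleftrightarrow> unmatched n s \<noteq> {} \<and> s' = alg_step n u v eA eP s"

definition reachable :: "nat \<Rightarrow> (nat \<Rightarrow> real) \<Rightarrow> (nat \<Rightarrow> real) \<Rightarrow> (nat \<Rightarrow> nat \<Rightarrow> real) \<Rightarrow> (nat \<Rightarrow> nat \<Rightarrow> real) \<Rightarrow> st \<Rightarrow> bool" where
  "reachable n u v eA eP s \<longleftrightarrow> (loop_step n u v eA eP)\<^sup>*\<^sup>* init_st s"

definition considering :: "nat \<Rightarrow> (nat \<Rightarrow> real) \<Rightarrow> (nat \<Rightarrow> real) \<Rightarrow> (nat \<Rightarrow> nat \<Rightarrow> real) \<Rightarrow> (nat \<Rightarrow> nat \<Rightarrow> real) \<Rightarrow> st \<Rightarrow> bool" where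
  "considering n u v eA eP s \<longleftrightarrow> reachable n u v eA eP s \<and> unmatched n s \<noteq> {}"

definition event_2_4 :: "nat \<Rightarrow> (nat \<Rightarrow> real) \<Rightarrow> (nat \<Rightarrow> real) \<Rightarrow> (nat \<Rightarrow> nat \<Rightarrow> real) \<Rightarrow> (nat \<Rightarrow> nat \<Rightarrow> real) \<Rightarrow> bool" where
  "event_2_4 n u v eA eP \<longleftrightarrow>
     (\<forall>s. reachable n u v eA eP s \<longrightarrow>
        (\<forall>(i, j) \<in> intv s. real i \<le> real j + 8 * log 2 (real n))) \<and>
     (\<forall>s. considering n u v eA eP s \<longrightarrow>
        (\<forall>j' \<in> {1..n}. real j' < min (real (jstar n v eA s)) (real n - 8 * log 2 (real n))
            \<longrightarrow> (\<exists>i. mu s i = Some j')))"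

end

theory Submission
  imports Defs
begin

text \<open>Let \<open>X\<close> be the set of matched pairs \<open>(a\<^sub>i, p\<^sub>j)\<close> with \<open>i < k \<le> j\<close> and \<open>L = 8 log n\<close>.
  If some position \<open>p\<^sub>j\<^sub>0\<close> with \<open>j\<^sub>0 < k\<close> is unmatched, part (b) of the event forces
  \<open>j\<^sub>0 \<ge> n - L\<close>; the positions occurring in \<open>X\<close> are distinct and lie in \<open>[k, n]\<close>, so
  \<open>|X| \<le> n - j\<^sub>0 \<le> L\<close>. Otherwise the positions \<open>1, \<dots>, k - 1\<close> are all matched; matched pairs
  have interviewed, so by part (a) their partners have index at most \<open>k - 1 + L\<close>, as do the
  applicants occurring in \<open>X\<close>, which are different ones. Hence \<open>|X| + k - 1 \<le> k - 1 + L\<close>.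
  That the matching is injective and consists of interviewed pairs is an invariant of the run;
  its proof needs that every position that has rejected someone stays matched, which guarantees
  that some unmatched applicant still has a position to propose to.\<close>

lemma ex1_greatest_strict_total:
  assumes "finite A" "A \<noteq> {}"
    and trans: "\<And>x y z. R x y \<Longrightarrow> R y z \<Longrightarrow> R x z"
    and asym: "\<And>x y. R x y \<Longrightarrow> \<not> R y x"
    and total: "\<And>x y. x \<noteq> y \<Longrightarrow> R x y \<or> R y x"
  shows "\<exists>!x. x \<in> A \<and> (\<forall>y\<in>A. y \<noteq> x \<longrightarrow> R x y)"
proof -
  have "\<exists>x\<in>A. \<forall>y\<in>A. y \<noteq> x \<longrightarrow> R x y"
    using assms(1,2)
  proof (induction A rule: finite_ne_induct)
    case (insert x F)
    then obtain m where m: "m \<in> F" "\<forall>y\<in>F. y \<noteq> m \<longrightarrow> R m y" by blast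
    show ?case
    proof (cases "R x m")
      case True
      then have "\<forall>y\<in>insert x F. y \<noteq> x \<longrightarrow> R x y" using m by (auto intro: trans)
      then show ?thesis by blast
    next
      case False
      with m insert.hyps total[of m x] have "R m x" by blast
      with m show ?thesis by auto
    qed
  qed simp
  then obtain x where x: "x \<in> A" "\<forall>y\<in>A. y \<noteq> x \<longrightarrow> R x y" by blast
  show ?thesis
  proof (rule ex1I[of _ x])
    fix y assume "y \<in> A \<and> (\<forall>z\<in>A. z \<noteq> y \<longrightarrow> R y z)"
    with x asym show "y = x" by metis
  qed (use x in blast)
qed

lemma ex1_greatest_by_key:
  fixes f :: "'a::linorder \<Rightarrow> 'b::linorder"
  assumes "finite A" "A \<noteq> {}"
  shows "\<exists>!x. x \<in> A \<and> (\<forall>y\<in>A. y \<noteq> x \<longrightarrow> f x > f y \<or> (f x = f y \<and> x < y))"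
proof (rule ex1_greatest_strict_total[OF assms])
  fix x y z
  show "f x > f y \<or> f x = f y \<and> x < y \<Longrightarrow> f y > f z \<or> f y = f z \<and> y < z \<Longrightarrow>
    f x > f z \<or> f x = f z \<and> x < z"
    by auto
qed auto

lemma beta_in_avail:
  assumes "avail n s i \<noteq> {}"
  shows "beta n v eA s i \<in> avail n s i"
proof -
  have "finite (avail n s i)" unfolding avail_def by simp
  from theI'[OF ex1_greatest_by_key[OF this assms]] show ?thesis
    unfolding beta_def prefA_def by blast
qed

lemma istar_proposes_to_jstar:
  assumes "proposers n s \<noteq> {}"
  shows "istar n u v eA eP s \<in> proposers n s"
    and "beta n v eA s (istar n u v eA eP s) = jstar n v eA s"
proof -
  define S where "S = {i \<in> proposers n s. beta n v eA s i = jstar n v eA s}"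
  have fin: "finite (proposers n s)" unfolding proposers_def unmatched_def by simp
  then have "jstar n v eA s \<in> beta n v eA s ` proposers n s"
    unfolding jstar_def using assms by (intro Min_in) auto
  then have "S \<noteq> {}" unfolding S_def by auto
  moreover have "finite S" using fin unfolding S_def by simp
  ultimately have "istar n u v eA eP s \<in> S"
    using theI'[OF ex1_greatest_by_key] unfolding istar_def Let_def S_def prefP_def by blast
  then show "istar n u v eA eP s \<in> proposers n s"
    and "beta n v eA s (istar n u v eA eP s) = jstar n v eA s"
    unfolding S_def by auto
qed

definition matching_invariant :: "nat \<Rightarrow> st \<Rightarrow> bool" where
  "matching_invariant n s \<longleftrightarrow>
     (\<forall>i j. mu s i = Some j \<longrightarrow> i \<in> {1..n} \<and> j \<in> {1..n} \<and> (i, j) \<in> intv s) \<and>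
     (\<forall>i i' j. mu s i = Some j \<longrightarrow> mu s i' = Some j \<longrightarrow> i = i') \<and>
     (\<forall>(i, j) \<in> rej s. j \<in> ran (mu s))"

lemma matching_invariantI:
  assumes "\<And>i j. mu s i = Some j \<Longrightarrow> i \<in> {1..n} \<and> j \<in> {1..n} \<and> (i, j) \<in> intv s"
    and "\<And>i i' j. mu s i = Some j \<Longrightarrow> mu s i' = Some j \<Longrightarrow> i = i'"
    and "\<And>i j. (i, j) \<in> rej s \<Longrightarrow> j \<in> ran (mu s)"
  shows "matching_invariant n s"
  using assms unfolding matching_invariant_def by blast

lemma
  assumes "matching_invariant n s"
  shows matching_invariant_matched:
      "mu s i = Some j \<Longrightarrow> i \<in> {1..n} \<and> j \<in> {1..n} \<and> (i, j) \<in> intv s"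
    and matching_invariant_inj: "mu s i = Some j \<Longrightarrow> mu s i' = Some j \<Longrightarrow> i = i'"
    and matching_invariant_rej: "(i, j) \<in> rej s \<Longrightarrow> j \<in> ran (mu s)"
  using assms unfolding matching_invariant_def by blast+

lemma matching_invariant_init: "matching_invariant n init_st"
  unfolding matching_invariant_def init_st_def by simp

lemma matching_invariant_interview:
  "matching_invariant n s \<Longrightarrow> matching_invariant n (s\<lparr>intv := insert p (intv s)\<rparr>)"
  unfolding matching_invariant_def by auto

lemma matching_invariant_reject:
  "matching_invariant n s \<Longrightarrow> j \<in> ran (mu s) \<Longrightarrow>
    matching_invariant n (s\<lparr>rej := insert (i, j) (rej s)\<rparr>)"
  unfolding matching_invariant_def by auto

lemma matching_invariant_match_free:
  assumes inv: "matching_invariant n s" and "mu s i = None" "j \<notin> ran (mu s)"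
    and "i \<in> {1..n}" "j \<in> {1..n}" "(i, j) \<in> intv s"
  shows "matching_invariant n (s\<lparr>mu := (mu s)(i := Some j)\<rparr>)" (is "matching_invariant n ?s'")
proof (rule matching_invariantI)
  have free: "mu s a \<noteq> Some j" for a using assms(3) by (auto intro: ranI)
  have graph: "mu ?s' a = Some b \<longleftrightarrow> a = i \<and> b = j \<or> a \<noteq> i \<and> mu s a = Some b" for a b
    by auto
  show "a \<in> {1..n} \<and> b \<in> {1..n} \<and> (a, b) \<in> intv ?s'" if "mu ?s' a = Some b" for a b
    using that assms matching_invariant_matched[OF inv] unfolding graph by auto
  show "a = a'" if "mu ?s' a = Some b" "mu ?s' a' = Some b" for a a' b
    using that free matching_invariant_inj[OF inv] unfolding graph by blast
  show "b \<in> ran (mu ?s')" if "(a, b) \<in> rej ?s'" for a b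
    using that matching_invariant_rej[OF inv] \<open>mu s i = None\<close> by simp
qed

lemma matching_invariant_replace:
  assumes inv: "matching_invariant n s" and "mu s i = None" "mu s i' = Some j"
    and "i \<in> {1..n}" "(i, j) \<in> intv s"
  shows "matching_invariant n
           (s\<lparr>mu := (mu s)(i' := None, i := Some j), rej := insert (i', j) (rej s)\<rparr>)"
    (is "matching_invariant n ?s'")
proof (rule matching_invariantI)
  have only_i': "mu s a = Some j \<Longrightarrow> a = i'" for a
    using matching_invariant_inj[OF inv] \<open>mu s i' = Some j\<close> by blast
  have graph: "mu ?s' a = Some b \<longleftrightarrow> a = i \<and> b = j \<or> a \<noteq> i \<and> a \<noteq> i' \<and> mu s a = Some b" for a b
    using \<open>mu s i = None\<close> by auto
  have ran_mono: "ran (mu s) \<subseteq> ran (mu ?s')"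
  proof
    fix b assume "b \<in> ran (mu s)"
    then obtain a where a: "mu s a = Some b" unfolding ran_def by blast
    show "b \<in> ran (mu ?s')"
    proof (cases "b = j")
      case True
      then show ?thesis using graph[of i j] by (auto intro: ranI)
    next
      case False
      with a \<open>mu s i = None\<close> \<open>mu s i' = Some j\<close> have "a \<noteq> i" "a \<noteq> i'" by auto
      with a show ?thesis using graph[of a b] by (auto intro: ranI)
    qed
  qed
  show "a \<in> {1..n} \<and> b \<in> {1..n} \<and> (a, b) \<in> intv ?s'" if "mu ?s' a = Some b" for a b
    using that assms matching_invariant_matched[OF inv] unfolding graph by auto
  show "a = a'" if "mu ?s' a = Some b" "mu ?s' a' = Some b" for a a' b
    using that only_i' matching_invariant_inj[OF inv] unfolding graph by blast
  show "b \<in> ran (mu ?s')" if "(a, b) \<in> rej ?s'" for a b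
    using that matching_invariant_rej[OF inv] \<open>mu s i' = Some j\<close> ran_mono
    by (auto intro: ranI)
qed

lemma partner_SomeD:
  assumes "matching_invariant n s" "partner s j = Some i'"
  shows "mu s i' = Some j"
proof -
  have ex: "\<exists>i. mu s i = Some j"
    using assms(2) unfolding partner_def by (metis option.distinct(1))
  with assms(2) have "i' = (THE i. mu s i = Some j)"
    unfolding partner_def by simp
  moreover have "\<exists>!i. mu s i = Some j"
    using ex matching_invariant_inj[OF assms(1)] by blast
  ultimately show ?thesis using theI'[of "\<lambda>i. mu s i = Some j"] by simp
qed

lemma partner_NoneD: "partner s j = None \<Longrightarrow> j \<notin> ran (mu s)"
  unfolding partner_def ran_def by (auto split: if_splits)

lemma proposers_nonempty:
  assumes inv: "matching_invariant n s" and "unmatched n s \<noteq> {}"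
  shows "proposers n s \<noteq> {}"
proof
  assume "proposers n s = {}"
  obtain i0 where i0: "i0 \<in> {1..n}" "mu s i0 = None"
    using \<open>unmatched n s \<noteq> {}\<close> unfolding unmatched_def by auto
  with \<open>proposers n s = {}\<close> have "\<forall>j\<in>{1..n}. (i0, j) \<in> rej s"
    unfolding proposers_def unmatched_def avail_def by auto
  then have "{1..n} \<subseteq> ran (mu s)" using matching_invariant_rej[OF inv] by blast
  also have "ran (mu s) \<subseteq> (\<lambda>i. the (mu s i)) ` ({1..n} - {i0})"
  proof
    fix j assume "j \<in> ran (mu s)"
    then obtain i where "mu s i = Some j" unfolding ran_def by blast
    moreover from this have "i \<in> {1..n} - {i0}"
      using matching_invariant_matched[OF inv] i0 by auto
    ultimately show "j \<in> (\<lambda>i. the (mu s i)) ` ({1..n} - {i0})" by force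
  qed
  finally have "card {1..n} \<le> card ({1..n} - {i0})" by (intro surj_card_le) simp
  with i0 show False by (simp, linarith)
qed

lemma proposal_in_range:
  assumes "matching_invariant n s" "unmatched n s \<noteq> {}"
  shows "istar n u v eA eP s \<in> {1..n}" "mu s (istar n u v eA eP s) = None"
    and "jstar n v eA s \<in> {1..n}"
proof -
  have "proposers n s \<noteq> {}" using proposers_nonempty[OF assms] .
  then have "istar n u v eA eP s \<in> proposers n s"
    and "beta n v eA s (istar n u v eA eP s) = jstar n v eA s"
    by (rule istar_proposes_to_jstar)+
  then show "istar n u v eA eP s \<in> {1..n}" "mu s (istar n u v eA eP s) = None"
    and "jstar n v eA s \<in> {1..n}"
    using beta_in_avail[of n s "istar n u v eA eP s" v eA]
    unfolding proposers_def unmatched_def avail_def by auto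
qed

lemma matching_invariant_alg_step:
  assumes inv: "matching_invariant n s" and "unmatched n s \<noteq> {}"
  shows "matching_invariant n (alg_step n u v eA eP s)"
proof -
  define i where "i = istar n u v eA eP s"
  define j where "j = jstar n v eA s"
  have i: "i \<in> {1..n}" "mu s i = None" and j: "j \<in> {1..n}"
    using proposal_in_range[OF assms] unfolding i_def j_def by blast+
  note step = alg_step_def[of n u v eA eP s, unfolded Let_def, folded i_def j_def]
  show ?thesis
  proof (cases "(i, j) \<notin> intv s \<and> (i \<le> j \<or> better_than_cur u eP s j i)")
    case True
    with inv show ?thesis unfolding step by (simp add: matching_invariant_interview)
  next
    case no_interview: False
    show ?thesis
    proof (cases "partner s j")
      case None
      then have "(i, j) \<in> intv s" using no_interview unfolding better_than_cur_def by auto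
      with None inv i j show ?thesis
        unfolding step
        by (simp add: no_interview matching_invariant_match_free partner_NoneD)
    next
      case (Some i')
      have i': "mu s i' = Some j" using partner_SomeD[OF inv Some] .
      then have "i' \<noteq> i" using i by auto
      show ?thesis
      proof (cases "prefP u eP (intv s) j i' i")
        case True
        with Some inv i' show ?thesis
          unfolding step by (simp add: no_interview matching_invariant_reject ranI)
      next
        case False
        \<comment> \<open>an uninterviewed \<open>a\<^sub>i\<close> would have been interviewed, being preferred to \<open>a\<^sub>i\<^sub>'\<close>\<close>
        have "(i, j) \<in> intv s"
          using no_interview False \<open>i' \<noteq> i\<close> Some
          unfolding better_than_cur_def prefP_def by auto
        with Some False inv i i' show ?thesis
          unfolding step by (simp add: no_interview matching_invariant_replace)
      qed
    qed
  qed
qed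

lemma reachable_matching_invariant:
  assumes "reachable n u v eA eP s"
  shows "matching_invariant n s"
  using assms unfolding reachable_def
proof (induction rule: rtranclp_induct)
  case base
  show ?case by (rule matching_invariant_init)
next
  case (step s s')
  then show ?case unfolding loop_step_def by (simp add: matching_invariant_alg_step)
qed

definition crossing_pairs :: "(nat \<Rightarrow> nat option) \<Rightarrow> nat \<Rightarrow> nat \<Rightarrow> (nat \<times> nat) set" where
  "crossing_pairs m n k = {(i, j). i \<in> {1..n} \<and> m i = Some j \<and> i < k \<and> k \<le> j}"

lemma real_card_le_of_bounded:
  assumes "\<forall>y\<in>Y. 1 \<le> y \<and> real y \<le> r" "0 \<le> r"
  shows "real (card Y) \<le> r"
proof -
  have "Y \<subseteq> {1..nat \<lfloor>r\<rfloor>}"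
  proof
    fix y assume "y \<in> Y"
    with assms(1) have "1 \<le> y" "y \<le> nat \<lfloor>r\<rfloor>" by (auto intro: le_nat_floor)
    then show "y \<in> {1..nat \<lfloor>r\<rfloor>}" by simp
  qed
  then have "card Y \<le> nat \<lfloor>r\<rfloor>" using card_mono[of "{1..nat \<lfloor>r\<rfloor>}"] by fastforce
  then show ?thesis using of_nat_floor[OF assms(2)] by linarith
qed

lemma card_crossing_pairs_le_of_unmatched_position:
  assumes inj: "\<And>i i' j. m i = Some j \<Longrightarrow> m i' = Some j \<Longrightarrow> i = i'"
    and le_n: "\<And>i j. m i = Some j \<Longrightarrow> j \<le> n"
    and "j0 < k" "j0 \<le> n" "real n - L \<le> real j0"
  shows "real (card (crossing_pairs m n k)) \<le> L"
proof -
  have "inj_on snd (crossing_pairs m n k)"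
    using inj unfolding crossing_pairs_def by (auto intro!: inj_onI)
  moreover have "snd ` crossing_pairs m n k \<subseteq> {k..n}"
    using le_n unfolding crossing_pairs_def by auto
  ultimately have "card (crossing_pairs m n k) \<le> card {k..n}"
    by (metis card_image card_mono finite_atLeastAtMost)
  then have "real (card (crossing_pairs m n k)) \<le> real n - real j0"
    using \<open>j0 < k\<close> \<open>j0 \<le> n\<close> by auto
  with \<open>real n - L \<le> real j0\<close> show ?thesis by linarith
qed

lemma card_crossing_pairs_le_of_matched_prefix:
  assumes range: "\<And>i j. m i = Some j \<Longrightarrow> 1 \<le> i \<and> real i \<le> real j + L"
    and filled: "{1..<k} \<subseteq> ran m" and "0 \<le> L"
  shows "real (card (crossing_pairs m n k)) \<le> L"
proof (cases "k = 0")
  case True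
  then show ?thesis using \<open>0 \<le> L\<close> unfolding crossing_pairs_def by simp
next
  case False
  define X where "X = crossing_pairs m n k"
  define P where "P = {i. \<exists>j\<in>{1..<k}. m i = Some j}"
  have fst_X: "1 \<le> i \<and> real i \<le> real k - 1 + L" if "i \<in> fst ` X" for i
    using that \<open>0 \<le> L\<close> range unfolding X_def crossing_pairs_def by force
  have P: "1 \<le> i \<and> real i \<le> real k - 1 + L" if "i \<in> P" for i
  proof -
    from that obtain j where "j < k" "m i = Some j" unfolding P_def by auto
    with range[of i j] show ?thesis by linarith
  qed
  have "real (card (fst ` X \<union> P)) \<le> real k - 1 + L"
    using fst_X P \<open>0 \<le> L\<close> False by (intro real_card_le_of_bounded) auto
  moreover have fin: "finite (fst ` X \<union> P)"
  proof (rule finite_subset[OF _ finite_atMost])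
    show "fst ` X \<union> P \<subseteq> {..nat \<lfloor>real k - 1 + L\<rfloor>}"
    proof
      fix i assume "i \<in> fst ` X \<union> P"
      with fst_X P have "real i \<le> real k - 1 + L" by blast
      then show "i \<in> {..nat \<lfloor>real k - 1 + L\<rfloor>}" unfolding atMost_iff by (rule le_nat_floor)
    qed
  qed
  moreover have "fst ` X \<inter> P = {}" unfolding X_def P_def crossing_pairs_def by force
  moreover have "inj_on fst X" unfolding X_def crossing_pairs_def by (auto intro: inj_onI)
  ultimately have "real (card X + card P) \<le> real k - 1 + L"
    by (simp add: card_Un_disjoint card_image)
  moreover have "k - 1 \<le> card P"
  proof -
    have "{1..<k} \<subseteq> (\<lambda>i. the (m i)) ` P"
    proof
      fix j assume "j \<in> {1..<k}"
      with filled obtain i where "m i = Some j" unfolding ran_def by blast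
      with \<open>j \<in> {1..<k}\<close> have "i \<in> P" "j = the (m i)" unfolding P_def by auto
      then show "j \<in> (\<lambda>i. the (m i)) ` P" by blast
    qed
    with fin have "card {1..<k} \<le> card P" by (intro surj_card_le) auto
    then show ?thesis by simp
  qed
  ultimately show ?thesis unfolding X_def using False by linarith
qed

lemma card_crossing_pairs_le:
  assumes inj: "\<And>i i' j. m i = Some j \<Longrightarrow> m i' = Some j \<Longrightarrow> i = i'"
    and range: "\<And>i j. m i = Some j \<Longrightarrow> i \<in> {1..n} \<and> j \<in> {1..n} \<and> real i \<le> real j + L"
    and filled: "\<forall>j \<in> {1..n}. real j < min (real k) (real n - L) \<longrightarrow> j \<in> ran m"
    and "0 \<le> L"
  shows "real (card (crossing_pairs m n k)) \<le> L"
proof (cases "\<exists>j0\<in>{1..<k}. j0 \<le> n \<and> j0 \<notin> ran m")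
  case True
  then obtain j0 where "j0 < k" "j0 \<in> {1..n}" "j0 \<notin> ran m" by auto
  with filled have "real n - L \<le> real j0" by fastforce
  moreover have "m i = Some j \<Longrightarrow> j \<le> n" for i j using range by simp
  ultimately show ?thesis
    using card_crossing_pairs_le_of_unmatched_position[OF inj] \<open>j0 < k\<close> \<open>j0 \<in> {1..n}\<close> by simp
next
  case False
  show ?thesis
  proof (cases "k \<le> n")
    case True
    with False have "{1..<k} \<subseteq> ran m" by auto
    with range \<open>0 \<le> L\<close> show ?thesis by (intro card_crossing_pairs_le_of_matched_prefix) auto
  next
    case False
    with range have "crossing_pairs m n k = {}" unfolding crossing_pairs_def by fastforce
    with \<open>0 \<le> L\<close> show ?thesis by simp
  qed
qed

lemma matched_pairs_close:
  assumes "event_2_4 n u v eA eP" "reachable n u v eA eP s" "mu s i = Some j"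
  shows "i \<in> {1..n} \<and> j \<in> {1..n} \<and> real i \<le> real j + 8 * log 2 (real n)"
proof -
  have "i \<in> {1..n} \<and> j \<in> {1..n} \<and> (i, j) \<in> intv s"
    using matching_invariant_matched[OF reachable_matching_invariant[OF assms(2)] assms(3)] .
  moreover have "\<forall>(i, j) \<in> intv s. real i \<le> real j + 8 * log 2 (real n)"
    using assms(1,2) unfolding event_2_4_def by blast
  ultimately show ?thesis by blast
qed

lemma low_positions_matched:
  assumes "event_2_4 n u v eA eP" "considering n u v eA eP s" "k \<le> jstar n v eA s"
  shows "\<forall>j \<in> {1..n}. real j < min (real k) (real n - 8 * log 2 (real n)) \<longrightarrow> j \<in> ran (mu s)"
proof (intro ballI impI)
  have "\<forall>j \<in> {1..n}. real j < min (real (jstar n v eA s)) (real n - 8 * log 2 (real n))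
          \<longrightarrow> (\<exists>i. mu s i = Some j)"
    using assms(1,2) unfolding event_2_4_def by blast
  moreover fix j assume "j \<in> {1..n}" "real j < min (real k) (real n - 8 * log 2 (real n))"
  ultimately obtain i where "mu s i = Some j" using assms(3) by fastforce
  then show "j \<in> ran (mu s)" by (rule ranI)
qed

theorem claim2p6:
  fixes n :: nat and u v :: "nat \<Rightarrow> real" and eA eP :: "nat \<Rightarrow> nat \<Rightarrow> real" and s :: st
  assumes "\<forall>i \<in> {1..n}. \<forall>i' \<in> {1..n}. i \<le> i' \<longrightarrow> u i' \<le> u i"
    and "\<forall>j \<in> {1..n}. \<forall>j' \<in> {1..n}. j \<le> j' \<longrightarrow> v j' \<le> v j"
    and "event_2_4 n u v eA eP"
    and "considering n u v eA eP s"
  shows "\<forall>k \<le> jstar n v eA s.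
           real (card {(i, j). i \<in> {1..n} \<and> mu s i = Some j \<and> i < k \<and> k \<le> j})
             \<le> 8 * log 2 (real n)"
proof (intro allI impI)
  fix k assume "k \<le> jstar n v eA s"
  have reach: "reachable n u v eA eP s" and "unmatched n s \<noteq> {}"
    using assms(4) unfolding considering_def by auto
  then have "0 \<le> 8 * log 2 (real n)" unfolding unmatched_def by auto
  have "real (card (crossing_pairs (mu s) n k)) \<le> 8 * log 2 (real n)"
    by (rule card_crossing_pairs_le[OF
          matching_invariant_inj[OF reachable_matching_invariant[OF reach]]
          matched_pairs_close[OF assms(3) reach]
          low_positions_matched[OF assms(3,4) \<open>k \<le> jstar n v eA s\<close>]
          \<open>0 \<le> 8 * log 2 (real n)\<close>])
  then show "real (card {(i, j). i \<in> {1..n} \<and> mu s i = Some j \<and> i < k \<and> k \<le> j})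
             \<le> 8 * log 2 (real n)"
    unfolding crossing_pairs_def .
qed

end
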